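(* Let $K=P(n_1,\dots,n_k)$ be a pretzel knot with its standard diagram $D$, with $n=|n_1|+\dots+|n_k|$ crossings numbered as described in the context, signed Tait graph $G$, and balanced overlaid Tait graph $\Gamma$ obtained by omitting the unbounded region $U$ and the upper deck $R_{\mathrm{top}}$. Then $$\sum_{\mu}\prod_{\varepsilon\in\mu}\alpha(\varepsilon)|_{Kh}=\pm\sum_{S}u^{u(S)}v^{v(S)},$$ where $\mu$ ranges over perfect matchings of $\Gamma$ and $S$ over spanning trees of $G$; i.e. the left side is, up to sign, the two-variable Poincaré polynomial of the Champanerkar–Kofman spanning tree chain complex for reduced Khovanov homology of $K$.
   Context: Pretzel diagram: for nonzero integers $n_1,\dots,n_k$, $k$ vertical twist columns placed left to right, column $i$ having $|n_i|$ crossings; adjacent columns joined at top and bottom by short arcs, and column 1 joined to column $k$ by an outer arc above and an outer arc below; the diagram is a knot. Regions: unbounded $U$; upper deck $R_{\mathrm{top}}$ (between the upper outer arc and the column tops); lower deck $R_{\mathrm{bot}}$; the $|n_i|-1$ regions inside column $i$; the regions $W_i$ between columns $i$ and $i+1$. Black regions: $R_{\mathrm{top}},R_{\mathrm{bot}}$ and the inside-column regions; white: $U,W_1,\dots,W_{k-1}$. Crossings numbered: column 1 top to bottom, then columns $2,\dots,k$ each bottom to top. Signed Tait graph $G$: vertices the black regions, one edge per crossing joining the two black regions there; positive if (viewing the crossing with the black regions above and below) the overstrand runs lower left to upper right, negative otherwise; edges ordered by crossing number. Tutte activity of edge $e$ w.r.t. spanning tree $S$: if $e\in S$, $L$ if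 $e$ is the lowest edge reconnecting $S-\{e\}$, else $D$; if $e\notin S$, $\ell$ if $e$ is the lowest edge of the unique cycle in $S\cup\{e\}$, else $d$; barred letters for negative edges. Gradings: $u(S)=\#L-\#\ell-\#\overline{L}+\#\overline{\ell}$ and $v(S)=\#L+\#D$, counting letters of the activity word of $S$. The spanning tree complex is $\mathcal{C}(D)=\bigoplus_{u,v}\mathbb{Z}\langle S : u(S)=u,\ v(S)=v\rangle$, with Poincaré polynomial $\sum_S u^{u(S)}v^{v(S)}$. $\Gamma$: bipartite plane graph with a vertex per crossing and a vertex per region other than $U,R_{\mathrm{top}}$, with an edge from crossing $c$ to region $R$ for each corner of $c$ occupied by $R$. Activity weighting $\alpha(\varepsilon)$ of the edge $\varepsilon$ from crossing $c$ to region $R$: internal ($L/D$) if $R$ black, external ($\ell/d$) if $R$ white; live ($L$ or $\ell$) if $c$ is the lowest-numbered crossing incident with $R$, dead otherwise; barred if $c$'s Tait edge is negative. Evaluations $\alpha|_{Kh}$: $L\mapsto uv$, $D\mapsto v$, $\ell\mapsto u^{-1}$, $d\mapsto 1$, $\overline{L}\mapsto u^{-1}$, $\overline{D}\mapsto 1$, $\overline{\ell}\mapsto u$, $\overline{d}\mapsto 1$. *)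

theory Defs
  imports Complex_Main
begin

definition edge_rel :: "('e \<Rightarrow> 'v \<times> 'v) \<Rightarrow> 'e set \<Rightarrow> ('v \<times> 'v) set" where
  "edge_rel ends S = {(a, b). \<exists>e\<in>S. ends e = (a, b) \<or> ends e = (b, a)}"

definition conn :: "('e \<Rightarrow> 'v \<times> 'v) \<Rightarrow> 'e set \<Rightarrow> 'v \<Rightarrow> 'v \<Rightarrow> bool" where
  "conn ends S x y \<longleftrightarrow> (x, y) \<in> (edge_rel ends S)\<^sup>*"

text \<open>S is a spanning tree of the multigraph (V, E, ends): S spans V connectedly
  and contains no cycle (every edge of S is a bridge of S).\<close>
definition spanning_tree :: "'v set \<Rightarrow> 'e set \<Rightarrow> ('e \<Rightarrow> 'v \<times> 'v) \<Rightarrow> 'e set \<Rightarrow> bool" where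
  "spanning_tree V E ends S \<longleftrightarrow>
     S \<subseteq> E \<and> (\<forall>x\<in>V. \<forall>y\<in>V. conn ends S x y) \<and>
     (\<forall>e\<in>S. \<not> conn ends (S - {e}) (fst (ends e)) (snd (ends e)))"

definition fund_cut :: "'e set \<Rightarrow> ('e \<Rightarrow> 'v \<times> 'v) \<Rightarrow> 'e set \<Rightarrow> 'e \<Rightarrow> 'e set" where
  "fund_cut E ends S e = {f\<in>E. \<not> conn ends (S - {e}) (fst (ends f)) (snd (ends f))}"

definition fund_cycle :: "('e \<Rightarrow> 'v \<times> 'v) \<Rightarrow> 'e set \<Rightarrow> 'e \<Rightarrow> 'e set" where
  "fund_cycle ends S e = {e} \<union> {f\<in>S. \<not> conn ends (S - {f}) (fst (ends e)) (snd (ends e))}"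

definition tutte_live :: "'e set \<Rightarrow> ('e \<Rightarrow> 'v \<times> 'v) \<Rightarrow> ('e \<Rightarrow> nat) \<Rightarrow> 'e set \<Rightarrow> 'e \<Rightarrow> bool" where
  "tutte_live E ends key S e \<longleftrightarrow>
     (if e \<in> S then (\<forall>f\<in>fund_cut E ends S e. key e \<le> key f)
      else (\<forall>f\<in>fund_cycle ends S e. key e \<le> key f))"

text \<open>u-grading: #L - #l - #Lbar + #lbar\<close>
definition u_grading ::
  "'e set \<Rightarrow> ('e \<Rightarrow> 'v \<times> 'v) \<Rightarrow> ('e \<Rightarrow> nat) \<Rightarrow> ('e \<Rightarrow> bool) \<Rightarrow> 'e set \<Rightarrow> int" where
  "u_grading E ends key pos S =
     int (card {e\<in>E. e \<in> S \<and> tutte_live E ends key S e \<and> pos e})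
   - int (card {e\<in>E. e \<notin> S \<and> tutte_live E ends key S e \<and> pos e})
   - int (card {e\<in>E. e \<in> S \<and> tutte_live E ends key S e \<and> \<not> pos e})
   + int (card {e\<in>E. e \<notin> S \<and> tutte_live E ends key S e \<and> \<not> pos e})"

text \<open>v-grading: #L + #D (unbarred internal letters, i.e. positive tree edges)\<close>
definition v_grading :: "'e set \<Rightarrow> ('e \<Rightarrow> bool) \<Rightarrow> 'e set \<Rightarrow> nat" where
  "v_grading E pos S = card {e\<in>E. e \<in> S \<and> pos e}"

text \<open>Columns are numbered 1..k (k = length ns), column i has |ns!(i-1)| crossings.
  A crossing is a pair (i, p): column i, p-th crossing counted from the top (1 \<le> p \<le> m i).\<close>

definition pcols :: "int list \<Rightarrow> nat" where "pcols ns = length ns"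

definition pm :: "int list \<Rightarrow> nat \<Rightarrow> nat" where "pm ns i = nat \<bar>ns ! (i - 1)\<bar>"

definition crossings :: "int list \<Rightarrow> (nat \<times> nat) set" where
  "crossings ns = {(i, p). 1 \<le> i \<and> i \<le> pcols ns \<and> 1 \<le> p \<and> p \<le> pm ns i}"

text \<open>Crossing numbering: column 1 top to bottom, then columns 2..k each bottom to top.\<close>
definition cnum :: "int list \<Rightarrow> nat \<times> nat \<Rightarrow> nat" where
  "cnum ns c = (case c of (i, p) \<Rightarrow>
     if i = 1 then p else (\<Sum>j\<in>{1..<i}. pm ns j) + (pm ns i + 1 - p))"

datatype region = U | Rtop | Rbot | Inside nat nat | W nat
  \<comment> \<open>Inside i j: j-th region from the top inside column i (1 \<le> j \<le> m i - 1);
      W i: region between columns i and i+1 (1 \<le> i \<le> k - 1)\<close>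

definition regions :: "int list \<Rightarrow> region set" where
  "regions ns = {U, Rtop, Rbot}
     \<union> {Inside i j | i j. 1 \<le> i \<and> i \<le> pcols ns \<and> 1 \<le> j \<and> j < pm ns i}
     \<union> {W i | i. 1 \<le> i \<and> i < pcols ns}"

definition black :: "region \<Rightarrow> bool" where
  "black R \<longleftrightarrow> (case R of U \<Rightarrow> False | W _ \<Rightarrow> False | _ \<Rightarrow> True)"

datatype corner = North | South | West | East

definition corner_region :: "int list \<Rightarrow> nat \<times> nat \<Rightarrow> corner \<Rightarrow> region" where
  "corner_region ns c d = (case c of (i, p) \<Rightarrow> (case d of
      North \<Rightarrow> (if p = 1 then Rtop else Inside i (p - 1))
    | South \<Rightarrow> (if p = pm ns i then Rbot else Inside i p)
    | West \<Rightarrow> (if i = 1 then U else W (i - 1))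
    | East \<Rightarrow> (if i = pcols ns then U else W i)))"

text \<open>Sign of the Tait edge of a crossing of column i: positive iff n_i > 0
  (the twist handedness convention).\<close>
definition tait_pos :: "int list \<Rightarrow> nat \<times> nat \<Rightarrow> bool" where
  "tait_pos ns c = (ns ! (fst c - 1) > 0)"

definition tait_vertices :: "int list \<Rightarrow> region set" where
  "tait_vertices ns = {R\<in>regions ns. black R}"

text \<open>Edges of G are the crossings; the edge of c joins the black regions above and below c.\<close>
definition tait_ends :: "int list \<Rightarrow> nat \<times> nat \<Rightarrow> region \<times> region" where
  "tait_ends ns c = (corner_region ns c North, corner_region ns c South)"

definition tait_spanning_trees :: "int list \<Rightarrow> (nat \<times> nat) set set" where
  "tait_spanning_trees ns = {S. spanning_tree (tait_vertices ns) (crossings ns) (tait_ends ns) S}"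

definition tree_u :: "int list \<Rightarrow> (nat \<times> nat) set \<Rightarrow> int" where
  "tree_u ns S = u_grading (crossings ns) (tait_ends ns) (cnum ns) (tait_pos ns) S"

definition tree_v :: "int list \<Rightarrow> (nat \<times> nat) set \<Rightarrow> nat" where
  "tree_v ns S = v_grading (crossings ns) (tait_pos ns) S"

definition gamma_regions :: "int list \<Rightarrow> region set" where
  "gamma_regions ns = regions ns - {U, Rtop}"

definition gamma_edges :: "int list \<Rightarrow> ((nat \<times> nat) \<times> corner) set" where
  "gamma_edges ns = {(c, d). c \<in> crossings ns \<and> corner_region ns c d \<notin> {U, Rtop}}"

definition perfect_matching :: "int list \<Rightarrow> ((nat \<times> nat) \<times> corner) set \<Rightarrow> bool" where
  "perfect_matching ns M \<longleftrightarrow> M \<subseteq> gamma_edges ns \<and>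
     (\<forall>c\<in>crossings ns. card {d. (c, d) \<in> M} = 1) \<and>
     (\<forall>R\<in>gamma_regions ns. card {\<epsilon>\<in>M. corner_region ns (fst \<epsilon>) (snd \<epsilon>) = R} = 1)"

definition gamma_live :: "int list \<Rightarrow> (nat \<times> nat) \<times> corner \<Rightarrow> bool" where
  "gamma_live ns \<epsilon> = (case \<epsilon> of (c, d) \<Rightarrow>
     (\<forall>c'\<in>crossings ns. (\<exists>d'. corner_region ns c' d' = corner_region ns c d)
         \<longrightarrow> cnum ns c \<le> cnum ns c'))"

definition alpha_kh :: "int list \<Rightarrow> real \<Rightarrow> real \<Rightarrow> (nat \<times> nat) \<times> corner \<Rightarrow> real" where
  "alpha_kh ns u v \<epsilon> = (case \<epsilon> of (c, d) \<Rightarrow>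
     (let internal = black (corner_region ns c d); live = gamma_live ns \<epsilon> in
      if tait_pos ns c then
        (if internal then (if live then u * v else v) else (if live then inverse u else 1))
      else
        (if internal then (if live then inverse u else 1) else (if live then u else 1))))"

datatype endpoint = TL nat | TR nat | BL nat | BR nat

definition endpoints :: "int list \<Rightarrow> endpoint set" where
  "endpoints ns = (\<Union>i\<in>{1..pcols ns}. {TL i, TR i, BL i, BR i})"

text \<open>Strand pieces: through each column (a twist column with m crossings connects
  top-left to bottom-left iff m is even), the short arcs between adjacent columns,
  and the two outer arcs.\<close>
definition strand_arcs :: "int list \<Rightarrow> (endpoint \<times> endpoint) set" where
  "strand_arcs ns =
     {(TL i, if even (pm ns i) then BL i else BR i) | i. 1 \<le> i \<and> i \<le> pcols ns}
   \<union> {(TR i, if even (pm ns i) then BR i else BL i) | i. 1 \<le> i \<and> i \<le> pcols ns}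
   \<union> {(TR i, TL (i + 1)) | i. 1 \<le> i \<and> i < pcols ns}
   \<union> {(BR i, BL (i + 1)) | i. 1 \<le> i \<and> i < pcols ns}
   \<union> {(TL 1, TR (pcols ns)), (BL 1, BR (pcols ns))}"

definition pretzel_is_knot :: "int list \<Rightarrow> bool" where
  "pretzel_is_knot ns \<longleftrightarrow>
     (\<forall>x\<in>endpoints ns. \<forall>y\<in>endpoints ns. (x, y) \<in> (strand_arcs ns \<union> (strand_arcs ns)\<inverse>)\<^sup>*)"

end

theory Submission
  imports Defs
begin

text \<open>
  The Tait graph G is a bundle of k parallel paths from Rtop to Rbot, column i giving a path
  with |n_i| edges. A spanning tree therefore contains one complete column j and misses exactly
  one crossing (i, P i) of every other column i. The perfect matchings of \<Gamma> are indexed by the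
  same data: in column i the crossings above (i, P i) take their South corner, those below it
  their North corner, and (i, P i) itself takes Rbot if i = j and otherwise the white region on
  the side of column j. Under this bijection a crossing is matched to a black region exactly
  when it lies in the tree, and its matched edge is live exactly when the crossing is Tutte
  active for the tree, so every matching evaluates to the monomial of its tree.
\<close>

lemma card_eq_Suc_0_iff_ex1: "card A = Suc 0 \<longleftrightarrow> (\<exists>!x. x \<in> A)"
  using card_1_singleton_iff[of A] by auto

lemma of_nat_card_filter_eq_sum:
  "finite A \<Longrightarrow> of_nat (card {x \<in> A. Q x}) = (\<Sum>x\<in>A. of_bool (Q x) :: 'a::semiring_1)"
  by (simp add: Int_def conj_commute)

lemma prod_power_int_sum:
  "finite A \<Longrightarrow> (x::'a::field) \<noteq> 0 \<Longrightarrow> (\<Prod>a\<in>A. x powi f a) = x powi (\<Sum>a\<in>A. f a)"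
  by (induction A rule: finite_induct) (auto simp: power_int_add)

lemma conn_refl [simp]: "conn ends S x x"
  by (simp add: conn_def)

lemma conn_sym: "conn ends S x y \<Longrightarrow> conn ends S y x"
proof -
  have "sym (edge_rel ends S)" unfolding sym_def edge_rel_def by auto
  then show "conn ends S x y \<Longrightarrow> conn ends S y x" unfolding conn_def
    by (metis rtrancl_converseD rtrancl_converseI sym_conv_converse_eq)
qed

lemma conn_trans: "conn ends S x y \<Longrightarrow> conn ends S y z \<Longrightarrow> conn ends S x z"
  unfolding conn_def by auto

lemma conn_edge: "e \<in> S \<Longrightarrow> ends e = (a, b) \<Longrightarrow> conn ends S a b"
  unfolding conn_def edge_rel_def by (rule r_into_rtrancl) auto

lemma not_conn_across_closed_set:
  assumes closed: "\<And>e. e \<in> S \<Longrightarrow> fst (ends e) \<in> X \<longleftrightarrow> snd (ends e) \<in> X"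
    and across: "x \<in> X \<longleftrightarrow> y \<notin> X"
  shows "\<not> conn ends S x y"
proof
  have step: "(a, b) \<in> edge_rel ends S \<Longrightarrow> a \<in> X \<longleftrightarrow> b \<in> X" for a b
    unfolding edge_rel_def using closed by (auto, (metis fst_conv snd_conv)+)
  have "(a, b) \<in> (edge_rel ends S)\<^sup>* \<Longrightarrow> a \<in> X \<longleftrightarrow> b \<in> X" for a b
    by (induction rule: rtrancl_induct) (auto dest: step)
  moreover assume "conn ends S x y"
  ultimately show False using across unfolding conn_def by auto
qed

text \<open>The corners chosen down one twist column: South above some crossing q, North below it.\<close>
lemma corner_column_split:
  fixes f :: "nat \<Rightarrow> corner"
  assumes "1 \<le> n" and first: "f 1 \<noteq> North"
    and step: "\<And>p. 1 \<le> p \<Longrightarrow> p < n \<Longrightarrow> f p = South \<longleftrightarrow> f (Suc p) \<noteq> North"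
  obtains q where "1 \<le> q" "q \<le> n" "\<And>p. 1 \<le> p \<Longrightarrow> p < q \<Longrightarrow> f p = South"
    "\<And>p. q < p \<Longrightarrow> p \<le> n \<Longrightarrow> f p = North" "f q = South \<Longrightarrow> q = n"
proof
  define q where "q = (LEAST p. 1 \<le> p \<and> (f p \<noteq> South \<or> p = n))"
  have q: "1 \<le> q \<and> (f q \<noteq> South \<or> q = n)"
    unfolding q_def by (rule LeastI[of _ n]) (use assms in simp)
  show q_n: "q \<le> n"
    unfolding q_def by (rule Least_le) (use assms in simp)
  show above: "f p = South" if "1 \<le> p" "p < q" for p
    using not_less_Least[of p "\<lambda>p. 1 \<le> p \<and> (f p \<noteq> South \<or> p = n)"] that q_n
    unfolding q_def[symmetric] by auto
  show "1 \<le> q" using q by simp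
  show "f q = South \<Longrightarrow> q = n" using q by simp
  have not_north: "f q \<noteq> North"
  proof (cases "q = 1")
    case False
    then have "1 \<le> q - 1" "Suc (q - 1) = q"
      using q by auto
    then show ?thesis using step[of "q - 1"] above[of "q - 1"] q_n by simp
  qed (use first in simp)
  show "f p = North" if "q < p" "p \<le> n" for p
  proof -
    have "Suc q \<le> p" using that by simp
    then show ?thesis
      using that(2)
    proof (induction p rule: dec_induct)
      case base
      then show ?case using step[of q] q not_north by auto
    next
      case (step p)
      then show ?case using assms(3)[of p] q by auto
    qed
  qed
qed

text \<open>The corners chosen along the row of crossings (i, P i): East before the full column j,
  West after it.\<close>
lemma corner_row_split:
  fixes g :: "nat \<Rightarrow> corner"
  assumes j: "1 \<le> j" "j \<le> n" "g j = South"
    and step: "\<And>i. 1 \<le> i \<Longrightarrow> i < n \<Longrightarrow> g i = East \<longleftrightarrow> g (Suc i) \<noteq> West"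
  shows "1 \<le> i \<Longrightarrow> i < j \<Longrightarrow> g i = East"
    and "j < i \<Longrightarrow> i \<le> n \<Longrightarrow> g i = West"
proof -
  have not_west: "g i \<noteq> West" if "1 \<le> i" "i \<le> j" for i
    using that(2,1)
  proof (induction i rule: inc_induct)
    case base
    then show ?case using j by simp
  next
    case (step i)
    then show ?case using assms(4)[of i] j by auto
  qed
  show "1 \<le> i \<Longrightarrow> i < j \<Longrightarrow> g i = East"
    using not_west[of "Suc i"] step[of i] j by simp
  show "g i = West" if "j < i" "i \<le> n"
  proof -
    have "Suc j \<le> i" using that by simp
    then show ?thesis
      using that(2)
    proof (induction i rule: dec_induct)
      case base
      then show ?case using step[of j] j by simp
    next
      case (step i)
      then show ?case using assms(4)[of i] j by auto
    qed
  qed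
qed

locale pretzel_diagram =
  fixes ns :: "int list"
  assumes nonempty: "ns \<noteq> []" and nonzero: "\<forall>n\<in>set ns. n \<noteq> 0"
begin

abbreviation "k \<equiv> pcols ns"
abbreviation "m \<equiv> pm ns"

lemma k_pos: "1 \<le> k"
  using nonempty by (simp add: pcols_def Suc_leI)

lemma m_pos: "1 \<le> i \<Longrightarrow> i \<le> k \<Longrightarrow> 1 \<le> m i"
  using nonzero by (auto simp: pm_def pcols_def Suc_le_eq)

lemma crossing_iff: "(i, p) \<in> crossings ns \<longleftrightarrow> 1 \<le> i \<and> i \<le> k \<and> 1 \<le> p \<and> p \<le> m i"
  by (simp add: crossings_def)

lemma finite_crossings: "finite (crossings ns)"
proof -
  have "crossings ns = Sigma {1..k} (\<lambda>i. {1..m i})"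
    by (auto simp: crossings_def)
  then show ?thesis by simp
qed

subsection \<open>The Tait graph as k parallel paths\<close>

definition col_vertex :: "nat \<Rightarrow> nat \<Rightarrow> region" where
  "col_vertex i q = (if q = 0 then Rtop else if q = m i then Rbot else Inside i q)"

lemma col_vertex_0 [simp]: "col_vertex i 0 = Rtop"
  by (simp add: col_vertex_def)

lemma col_vertex_m [simp]: "1 \<le> i \<Longrightarrow> i \<le> k \<Longrightarrow> col_vertex i (m i) = Rbot"
  using m_pos[of i] by (auto simp: col_vertex_def)

lemma tait_ends_col_vertex:
  "1 \<le> p \<Longrightarrow> p \<le> m i \<Longrightarrow> tait_ends ns (i, p) = (col_vertex i (p - 1), col_vertex i p)"
  by (auto simp: tait_ends_def corner_region_def col_vertex_def)

lemma tait_vertex_cases: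
  assumes "x \<in> tait_vertices ns"
  obtains i q where "1 \<le> i" "i \<le> k" "q \<le> m i" "x = col_vertex i q"
proof (cases x)
  case Rtop
  then show ?thesis using that[of 1 0] k_pos by simp
next
  case Rbot
  then show ?thesis using that[of 1 "m 1"] k_pos by simp
next
  case (Inside i q)
  then show ?thesis using that[of i q] assms
    by (auto simp: tait_vertices_def regions_def col_vertex_def)
qed (use assms in \<open>auto simp: tait_vertices_def black_def\<close>)

lemma Rtop_tait_vertex: "Rtop \<in> tait_vertices ns"
  and Rbot_tait_vertex: "Rbot \<in> tait_vertices ns"
  by (simp_all add: tait_vertices_def regions_def black_def)

lemma Inside_tait_vertex:
  "1 \<le> i \<Longrightarrow> i \<le> k \<Longrightarrow> 1 \<le> q \<Longrightarrow> q < m i \<Longrightarrow> Inside i q \<in> tait_vertices ns"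
  by (simp add: tait_vertices_def regions_def black_def)

lemma conn_along_column:
  assumes "\<And>r. a < r \<Longrightarrow> r \<le> b \<Longrightarrow> (i, r) \<in> S" "a \<le> b" "b \<le> m i"
  shows "conn (tait_ends ns) S (col_vertex i a) (col_vertex i b)"
  using assms
proof (induction b)
  case (Suc b)
  show ?case
  proof (cases "a = Suc b")
    case False
    then have "conn (tait_ends ns) S (col_vertex i a) (col_vertex i b)"
      using Suc by auto
    moreover have "conn (tait_ends ns) S (col_vertex i b) (col_vertex i (Suc b))"
      by (rule conn_edge[of "(i, Suc b)"]) (use Suc False in \<open>auto simp: tait_ends_col_vertex\<close>)
    ultimately show ?thesis by (rule conn_trans)
  qed simp
qed simp

text \<open>Through the full column j, the part of column i below p0 reaches Rtop via Rbot.\<close>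
lemma conn_Rtop:
  assumes full: "\<And>r. 1 \<le> r \<Longrightarrow> r \<le> m j \<Longrightarrow> (j, r) \<in> S" "1 \<le> j" "j \<le> k"
    and almost_full: "\<And>r. 1 \<le> r \<Longrightarrow> r \<le> m i \<Longrightarrow> r \<noteq> p0 \<Longrightarrow> (i, r) \<in> S"
    and "q \<le> m i" "1 \<le> i" "i \<le> k"
  shows "conn (tait_ends ns) S (col_vertex i q) Rtop"
proof -
  have top_bot: "conn (tait_ends ns) S Rtop Rbot"
    using conn_along_column[of 0 "m j" j S] full by simp
  show ?thesis
  proof (cases "q < p0")
    case True
    have "conn (tait_ends ns) S (col_vertex i 0) (col_vertex i q)"
      by (rule conn_along_column) (use assms True in auto)
    then show ?thesis by (simp add: conn_sym)
  next
    case False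
    have "conn (tait_ends ns) S (col_vertex i q) (col_vertex i (m i))"
      by (rule conn_along_column) (use assms False in auto)
    then show ?thesis using top_bot assms conn_sym conn_trans by (metis col_vertex_m)
  qed
qed

definition upper_part :: "(nat \<Rightarrow> nat) \<Rightarrow> region set" where
  "upper_part H = {Rtop} \<union> {Inside i q | i q. 1 \<le> i \<and> i \<le> k \<and> 1 \<le> q \<and> q < H i}"

definition column_segment :: "nat \<Rightarrow> nat \<Rightarrow> nat \<Rightarrow> region set" where
  "column_segment i a b = {Inside i q | q. a \<le> q \<and> q < b}"

lemma crossing_crosses_upper_part:
  assumes H: "\<And>i. 1 \<le> i \<Longrightarrow> i \<le> k \<Longrightarrow> 1 \<le> H i \<and> H i \<le> m i"
    and c: "(i, r) \<in> crossings ns"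
  shows "(fst (tait_ends ns (i, r)) \<in> upper_part H \<longleftrightarrow> snd (tait_ends ns (i, r)) \<in> upper_part H)
     \<longleftrightarrow> r \<noteq> H i"
proof -
  have r: "1 \<le> i" "i \<le> k" "1 \<le> r" "r \<le> m i"
    using c by (auto simp: crossing_iff)
  have "col_vertex i q \<in> upper_part H \<longleftrightarrow> q < H i" if "q \<le> m i" for q
    using H[OF r(1,2)] r that by (auto simp: col_vertex_def upper_part_def)
  then show ?thesis using r
    by (simp add: tait_ends_col_vertex) linarith
qed

lemma crossing_crosses_column_segment:
  assumes "1 \<le> a" "b \<le> m i'" and c: "(i, r) \<in> crossings ns"
  shows "(fst (tait_ends ns (i, r)) \<in> column_segment i' a b
      \<longleftrightarrow> snd (tait_ends ns (i, r)) \<in> column_segment i' a b)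
     \<longleftrightarrow> \<not> (i = i' \<and> a < b \<and> (r = a \<or> r = b))"
proof -
  have r: "1 \<le> r" "r \<le> m i"
    using c by (auto simp: crossing_iff)
  have "col_vertex i q \<in> column_segment i' a b \<longleftrightarrow> i = i' \<and> a \<le> q \<and> q < b" if "q \<le> m i" for q
    using assms that by (auto simp: col_vertex_def column_segment_def)
  then show ?thesis using r
    by (simp add: tait_ends_col_vertex) linarith
qed

subsection \<open>Spanning trees of the Tait graph\<close>

text \<open>A spanning tree consists of one full column j and of all crossings but (i, P i) of
  every other column i. The values P j = m j (which makes (j, m j) the crossing matched into
  Rbot) and P i = 0 outside the columns are normalisations making (j, P) unique.\<close>
definition admissible :: "nat \<Rightarrow> (nat \<Rightarrow> nat) \<Rightarrow> bool" where
  "admissible j P \<longleftrightarrow> 1 \<le> j \<and> j \<le> k \<and> P j = m j \<and>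
     (\<forall>i. 1 \<le> i \<and> i \<le> k \<longrightarrow> 1 \<le> P i \<and> P i \<le> m i) \<and>
     (\<forall>i. \<not> (1 \<le> i \<and> i \<le> k) \<longrightarrow> P i = 0)"

definition state_tree :: "nat \<Rightarrow> (nat \<Rightarrow> nat) \<Rightarrow> (nat \<times> nat) set" where
  "state_tree j P = {c \<in> crossings ns. fst c = j \<or> snd c \<noteq> P (fst c)}"

definition tree_cut :: "nat \<Rightarrow> (nat \<Rightarrow> nat) \<Rightarrow> nat \<times> nat \<Rightarrow> (nat \<times> nat) set" where
  "tree_cut j P f = (if fst f = j then insert f {(i, P i) | i. 1 \<le> i \<and> i \<le> k \<and> i \<noteq> j}
     else {f, (fst f, P (fst f))})"

lemma admissibleD:
  assumes "admissible j P"
  shows "1 \<le> j" "j \<le> k" "P j = m j" "\<And>i. 1 \<le> i \<Longrightarrow> i \<le> k \<Longrightarrow> 1 \<le> P i \<and> P i \<le> m i"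
  using assms by (auto simp: admissible_def)

lemma admissible_crossing:
  "admissible j P \<Longrightarrow> 1 \<le> i \<Longrightarrow> i \<le> k \<Longrightarrow> (i, P i) \<in> crossings ns"
  by (auto simp: crossing_iff dest: admissibleD(4))

lemma tree_cut_disconnects_full_column:
  assumes adm: "admissible j P" and f: "(j, p) \<in> crossings ns"
    and g: "(i, r) \<in> crossings ns" "(i, r) \<in> tree_cut j P (j, p)"
  shows "\<not> conn (tait_ends ns) (state_tree j P - {(j, p)})
    (fst (tait_ends ns (i, r))) (snd (tait_ends ns (i, r)))"
proof -
  define H where "H = P(j := p)"
  have H: "\<And>a. 1 \<le> a \<Longrightarrow> a \<le> k \<Longrightarrow> 1 \<le> H a \<and> H a \<le> m a"
    using admissibleD(4)[OF adm] f by (auto simp: H_def crossing_iff)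
  show ?thesis
  proof (rule not_conn_across_closed_set)
    fix e assume e: "e \<in> state_tree j P - {(j, p)}"
    obtain a b where e_eq: "e = (a, b)" "(a, b) \<in> crossings ns"
      using e by (cases e) (auto simp: state_tree_def)
    moreover have "b \<noteq> H a"
      using e e_eq by (auto simp: state_tree_def H_def)
    ultimately show "fst (tait_ends ns e) \<in> upper_part H \<longleftrightarrow> snd (tait_ends ns e) \<in> upper_part H"
      using crossing_crosses_upper_part[OF H, of a b] by simp
  next
    have "r = H i"
      using g by (auto simp: tree_cut_def H_def crossing_iff)
    then show "fst (tait_ends ns (i, r)) \<in> upper_part H \<longleftrightarrow> snd (tait_ends ns (i, r)) \<notin> upper_part H"
      using crossing_crosses_upper_part[OF H g(1)] by simp
  qed
qed

lemma tree_cut_disconnects_other_column: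
  assumes adm: "admissible j P" and f: "(i, p) \<in> state_tree j P" "i \<noteq> j"
    and g: "(i', r) \<in> crossings ns" "(i', r) \<in> tree_cut j P (i, p)"
  shows "\<not> conn (tait_ends ns) (state_tree j P - {(i, p)})
    (fst (tait_ends ns (i', r))) (snd (tait_ends ns (i', r)))"
proof -
  define a where "a = min p (P i)"
  define b where "b = max p (P i)"
  have "p \<noteq> P i" "(i, p) \<in> crossings ns"
    using f by (auto simp: state_tree_def)
  then have ab: "1 \<le> a" "b \<le> m i" "a < b"
    using admissibleD(4)[OF adm, of i] by (auto simp: a_def b_def crossing_iff)
  show ?thesis
  proof (rule not_conn_across_closed_set)
    fix e assume e: "e \<in> state_tree j P - {(i, p)}"
    obtain a' b' where e_eq: "e = (a', b')" "(a', b') \<in> crossings ns"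
      using e by (cases e) (auto simp: state_tree_def)
    moreover have "\<not> (a' = i \<and> a < b \<and> (b' = a \<or> b' = b))"
      using e e_eq f unfolding a_def b_def by (auto simp: state_tree_def)
    ultimately show "fst (tait_ends ns e) \<in> column_segment i a b
        \<longleftrightarrow> snd (tait_ends ns e) \<in> column_segment i a b"
      using crossing_crosses_column_segment[OF ab(1,2), of a' b'] by simp
  next
    have "i' = i \<and> (r = a \<or> r = b)"
      using g f by (auto simp: tree_cut_def a_def b_def)
    then show "fst (tait_ends ns (i', r)) \<in> column_segment i a b
        \<longleftrightarrow> snd (tait_ends ns (i', r)) \<notin> column_segment i a b"
      using crossing_crosses_column_segment[OF ab(1,2) g(1)] ab(3) by simp
  qed
qed

lemma tree_cut_disconnects:
  assumes "admissible j P" "f \<in> state_tree j P" "g \<in> crossings ns" "g \<in> tree_cut j P f"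
  shows "\<not> conn (tait_ends ns) (state_tree j P - {f}) (fst (tait_ends ns g)) (snd (tait_ends ns g))"
proof -
  obtain i p i' r where "f = (i, p)" "g = (i', r)"
    by fastforce
  moreover have "(i, p) \<in> crossings ns" if "f = (i, p)"
    using assms(2) that by (simp add: state_tree_def)
  ultimately show ?thesis
    using assms tree_cut_disconnects_full_column tree_cut_disconnects_other_column
    by (cases "i = j") auto
qed

lemma tree_minus_edge_connects:
  assumes adm: "admissible j P" and f: "f \<in> state_tree j P"
    and g: "g \<in> crossings ns" "g \<notin> tree_cut j P f"
  shows "conn (tait_ends ns) (state_tree j P - {f}) (fst (tait_ends ns g)) (snd (tait_ends ns g))"
proof (cases "g \<in> state_tree j P")
  case True
  then have "g \<noteq> f"
    using g by (auto simp: tree_cut_def split: if_splits)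
  then show ?thesis
    using True by (intro conn_edge[of g]) auto
next
  case False
  obtain i p where f_eq: "f = (i, p)" by fastforce
  obtain i' r where g_eq: "g = (i', r)" by fastforce
  note P = admissibleD[OF adm]
  have g': "i' \<noteq> j" "r = P i'" "1 \<le> i'" "i' \<le> k" "1 \<le> r" "r \<le> m i'"
    using False g g_eq by (auto simp: state_tree_def crossing_iff)
  have ij: "i \<noteq> j" "i' \<noteq> i"
    using g g' g_eq f_eq by (auto simp: tree_cut_def split: if_splits)
  have to_top: "conn (tait_ends ns) (state_tree j P - {f}) (col_vertex i' q) Rtop"
    if "q \<le> m i'" for q
  proof (rule conn_Rtop[of j _ i' "P i'"])
    show "(j, r') \<in> state_tree j P - {f}" if "1 \<le> r'" "r' \<le> m j" for r'
      using that P(1,2) ij f_eq by (auto simp: state_tree_def crossing_iff)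
    show "(i', r') \<in> state_tree j P - {f}" if "1 \<le> r'" "r' \<le> m i'" "r' \<noteq> P i'" for r'
      using that g' ij f_eq by (auto simp: state_tree_def crossing_iff)
  qed (use P g' that in auto)
  have "conn (tait_ends ns) (state_tree j P - {f}) (col_vertex i' (r - 1)) (col_vertex i' r)"
    using conn_trans[OF to_top[of "r - 1"] conn_sym[OF to_top[of r]]] g'(6) by simp
  then show ?thesis
    using g_eq g'(5,6) by (simp add: tait_ends_col_vertex)
qed

lemma tree_cut_iff:
  assumes "admissible j P" "f \<in> state_tree j P" "g \<in> crossings ns"
  shows "\<not> conn (tait_ends ns) (state_tree j P - {f}) (fst (tait_ends ns g)) (snd (tait_ends ns g))
    \<longleftrightarrow> g \<in> tree_cut j P f"
  using tree_cut_disconnects[OF assms] tree_minus_edge_connects[OF assms] by blast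

lemma state_tree_spanning:
  assumes adm: "admissible j P"
  shows "state_tree j P \<in> tait_spanning_trees ns"
proof -
  note P = admissibleD[OF adm]
  have to_top: "conn (tait_ends ns) (state_tree j P) x Rtop" if x: "x \<in> tait_vertices ns" for x
  proof -
    obtain i q where iq: "1 \<le> i" "i \<le> k" "q \<le> m i" "x = col_vertex i q"
      using tait_vertex_cases[OF x] .
    have "conn (tait_ends ns) (state_tree j P) (col_vertex i q) Rtop"
      by (rule conn_Rtop[of j _ i "P i"]) (use P iq in \<open>auto simp: state_tree_def crossing_iff\<close>)
    with iq show ?thesis by simp
  qed
  have bridge: "\<not> conn (tait_ends ns) (state_tree j P - {e}) (fst (tait_ends ns e)) (snd (tait_ends ns e))"
    if "e \<in> state_tree j P" for e
    using tree_cut_iff[OF adm that, of e] that by (auto simp: state_tree_def tree_cut_def)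
  show ?thesis
    unfolding tait_spanning_trees_def spanning_tree_def
  proof (intro CollectI conjI ballI)
    show "state_tree j P \<subseteq> crossings ns"
      by (auto simp: state_tree_def)
  next
    fix x y assume "x \<in> tait_vertices ns" "y \<in> tait_vertices ns"
    then show "conn (tait_ends ns) (state_tree j P) x y"
      using to_top conn_sym conn_trans by metis
  qed (rule bridge)
qed

lemma state_tree_inj:
  assumes adm: "admissible j P" "admissible j' P'" and eq: "state_tree j P = state_tree j' P'"
  shows "j = j' \<and> P = P'"
proof -
  note P = admissibleD[OF adm(1)] and P' = admissibleD[OF adm(2)]
  have "(j', P j') \<in> state_tree j' P'"
    using admissible_crossing[OF adm(1) P'(1,2)] by (simp add: state_tree_def)
  then have "(j', P j') \<in> state_tree j P"
    using eq by simp
  then have jj: "j = j'"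
    by (simp add: state_tree_def)
  have "P i = P' i" if "1 \<le> i" "i \<le> k" "i \<noteq> j" for i
  proof -
    have "(i, P i) \<notin> state_tree j P"
      using that(3) by (simp add: state_tree_def)
    then have "(i, P i) \<notin> state_tree j' P'"
      using eq by simp
    then show ?thesis
      using admissible_crossing[OF adm(1) that(1,2)] that(3) jj by (simp add: state_tree_def)
  qed
  moreover have "P i = P' i" if "\<not> (1 \<le> i \<and> i \<le> k)" for i
    using adm that by (simp add: admissible_def)
  ultimately have "P i = P' i" for i
    using P(3) P'(3) jj by (cases "i = j") auto
  then show ?thesis using jj by auto
qed

lemma tait_spanning_treeD:
  assumes "S \<in> tait_spanning_trees ns"
  shows "S \<subseteq> crossings ns"
    and "\<And>x y. x \<in> tait_vertices ns \<Longrightarrow> y \<in> tait_vertices ns \<Longrightarrow> conn (tait_ends ns) S x y"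
    and "\<And>e. e \<in> S \<Longrightarrow> \<not> conn (tait_ends ns) (S - {e}) (fst (tait_ends ns e)) (snd (tait_ends ns e))"
  using assms by (auto simp: tait_spanning_trees_def spanning_tree_def)

lemma spanning_tree_misses_one_per_column:
  assumes S: "S \<in> tait_spanning_trees ns"
    and r1: "(i, r1) \<in> crossings ns - S" and r2: "(i, r2) \<in> crossings ns - S"
  shows "r1 = r2"
proof (rule ccontr)
  assume "r1 \<noteq> r2"
  define a where "a = min r1 r2"
  define b where "b = max r1 r2"
  have i: "1 \<le> i" "i \<le> k"
    using r1 by (auto simp: crossing_iff)
  have ab: "1 \<le> a" "a < b" "b \<le> m i" "(i, a) \<notin> S" "(i, b) \<notin> S"
    using r1 r2 \<open>r1 \<noteq> r2\<close> by (auto simp: a_def b_def crossing_iff min_def max_def)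
  have "\<not> conn (tait_ends ns) S (Inside i a) Rtop"
  proof (rule not_conn_across_closed_set)
    fix e assume e: "e \<in> S"
    obtain a' b' where e_eq: "e = (a', b')" "(a', b') \<in> crossings ns"
      using e tait_spanning_treeD(1)[OF S] by (cases e) auto
    moreover have "\<not> (a' = i \<and> a < b \<and> (b' = a \<or> b' = b))"
      using e e_eq ab by auto
    ultimately show "fst (tait_ends ns e) \<in> column_segment i a b
        \<longleftrightarrow> snd (tait_ends ns e) \<in> column_segment i a b"
      using crossing_crosses_column_segment[OF ab(1,3), of a' b'] by simp
  qed (use ab in \<open>auto simp: column_segment_def\<close>)
  moreover have "Inside i a \<in> tait_vertices ns"
    using Inside_tait_vertex ab i by auto
  ultimately show False
    using tait_spanning_treeD(2)[OF S] Rtop_tait_vertex by blast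
qed

lemma spanning_tree_full_column:
  assumes S: "S \<in> tait_spanning_trees ns"
  obtains j where "1 \<le> j" "j \<le> k" "\<And>r. 1 \<le> r \<Longrightarrow> r \<le> m j \<Longrightarrow> (j, r) \<in> S"
proof (rule ccontr)
  assume "\<not> thesis"
  with that have "\<forall>i. \<exists>r. 1 \<le> i \<and> i \<le> k \<longrightarrow> 1 \<le> r \<and> r \<le> m i \<and> (i, r) \<notin> S"
    by blast
  then obtain H where H: "\<And>i. 1 \<le> i \<Longrightarrow> i \<le> k \<Longrightarrow> 1 \<le> H i \<and> H i \<le> m i \<and> (i, H i) \<notin> S"
    by metis
  have "\<not> conn (tait_ends ns) S Rtop Rbot"
  proof (rule not_conn_across_closed_set)
    fix e assume e: "e \<in> S"
    obtain a b where e_eq: "e = (a, b)" "(a, b) \<in> crossings ns"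
      using e tait_spanning_treeD(1)[OF S] by (cases e) auto
    moreover have "b \<noteq> H a"
      using H[of a] e e_eq by (auto simp: crossing_iff)
    ultimately show "fst (tait_ends ns e) \<in> upper_part H \<longleftrightarrow> snd (tait_ends ns e) \<in> upper_part H"
      using crossing_crosses_upper_part[of H a b] H by simp
  qed (auto simp: upper_part_def)
  then show False
    using tait_spanning_treeD(2)[OF S] Rtop_tait_vertex Rbot_tait_vertex by blast
qed

text \<open>Two full columns would form a cycle through Rtop and Rbot.\<close>
lemma spanning_tree_other_column_not_full:
  assumes S: "S \<in> tait_spanning_trees ns"
    and j: "1 \<le> j" "j \<le> k" "\<And>r. 1 \<le> r \<Longrightarrow> r \<le> m j \<Longrightarrow> (j, r) \<in> S"
    and i: "1 \<le> i" "i \<le> k" "i \<noteq> j"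
  shows "\<exists>r. (i, r) \<in> crossings ns - S"
proof (rule ccontr)
  assume "\<not> ?thesis"
  then have full_i: "\<And>r. 1 \<le> r \<Longrightarrow> r \<le> m i \<Longrightarrow> (i, r) \<in> S"
    using i by (auto simp: crossing_iff)
  let ?S' = "S - {(j, 1)}"
  have m1: "1 \<le> m j"
    using m_pos j by auto
  have "conn (tait_ends ns) ?S' (col_vertex i 0) (col_vertex i (m i))"
    by (rule conn_along_column) (use full_i i in auto)
  then have top_bot: "conn (tait_ends ns) ?S' Rtop Rbot"
    using i by simp
  have "conn (tait_ends ns) ?S' (col_vertex j 1) (col_vertex j (m j))"
    by (rule conn_along_column) (use j m1 in auto)
  then have "conn (tait_ends ns) ?S' (col_vertex j 1) Rbot"
    using j by simp
  then have "conn (tait_ends ns) ?S' (col_vertex j 0) (col_vertex j 1)"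
    using conn_trans[OF top_bot conn_sym] by simp
  moreover have "tait_ends ns (j, 1) = (col_vertex j 0, col_vertex j 1)"
    using tait_ends_col_vertex[of 1 j] m1 by simp
  ultimately show False
    using tait_spanning_treeD(3)[OF S j(3)[OF order_refl m1]] by simp
qed

lemma spanning_tree_state_tree:
  assumes S: "S \<in> tait_spanning_trees ns"
  obtains j P where "admissible j P" "S = state_tree j P"
proof -
  obtain j where j: "1 \<le> j" "j \<le> k" "\<And>r. 1 \<le> r \<Longrightarrow> r \<le> m j \<Longrightarrow> (j, r) \<in> S"
    using spanning_tree_full_column[OF S] by blast
  define P where "P i = (if i = j then m j else if 1 \<le> i \<and> i \<le> k
      then (SOME r. (i, r) \<in> crossings ns - S) else 0)" for i
  have P_missing: "(i, P i) \<in> crossings ns - S" if "1 \<le> i" "i \<le> k" "i \<noteq> j" for i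
    using someI_ex[OF spanning_tree_other_column_not_full[OF S j that]] that by (simp add: P_def)
  have adm: "admissible j P"
    using j m_pos P_missing by (auto simp: admissible_def P_def crossing_iff)
  have "S = state_tree j P"
  proof
    show "S \<subseteq> state_tree j P"
      using tait_spanning_treeD(1)[OF S] P_missing by (fastforce simp: state_tree_def crossing_iff)
  next
    show "state_tree j P \<subseteq> S"
    proof
      fix c assume c: "c \<in> state_tree j P"
      obtain i p where c_eq: "c = (i, p)" by fastforce
      have cr: "(i, p) \<in> crossings ns" "1 \<le> i" "i \<le> k"
        using c c_eq by (auto simp: state_tree_def crossing_iff)
      show "c \<in> S"
      proof (cases "i = j")
        case True
        then show ?thesis using j cr c_eq by (auto simp: crossing_iff)
      next
        case False
        then have "p \<noteq> P i"
          using c c_eq by (simp add: state_tree_def)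
        then show ?thesis
          using spanning_tree_misses_one_per_column[OF S _ P_missing[OF cr(2,3) False]] cr c_eq
          by blast
      qed
    qed
  qed
  with adm that show thesis by blast
qed

subsection \<open>Perfect matchings of the overlaid Tait graph\<close>

definition corner_graph :: "(nat \<times> nat \<Rightarrow> corner) \<Rightarrow> ((nat \<times> nat) \<times> corner) set" where
  "corner_graph d = (\<lambda>c. (c, d c)) ` crossings ns"

definition exact_corner_choice :: "(nat \<times> nat \<Rightarrow> corner) \<Rightarrow> bool" where
  "exact_corner_choice d \<longleftrightarrow> (\<forall>c\<in>crossings ns. corner_region ns c (d c) \<notin> {U, Rtop}) \<and>
     (\<forall>R\<in>gamma_regions ns. \<exists>!c. c \<in> crossings ns \<and> corner_region ns c (d c) = R)"

lemma perfect_matching_corner_graph: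
  "perfect_matching ns (corner_graph d) \<longleftrightarrow> exact_corner_choice d"
proof -
  have "{\<epsilon> \<in> corner_graph d. corner_region ns (fst \<epsilon>) (snd \<epsilon>) = R}
      = (\<lambda>c. (c, d c)) ` {c \<in> crossings ns. corner_region ns c (d c) = R}" for R
    by (auto simp: corner_graph_def)
  moreover have "inj (\<lambda>c. (c, d c))"
    by (auto intro: injI)
  ultimately have "card {\<epsilon> \<in> corner_graph d. corner_region ns (fst \<epsilon>) (snd \<epsilon>) = R}
      = card {c \<in> crossings ns. corner_region ns c (d c) = R}" for R
    by (simp add: card_image inj_on_subset)
  then have "(\<forall>R\<in>gamma_regions ns. card {\<epsilon> \<in> corner_graph d. corner_region ns (fst \<epsilon>) (snd \<epsilon>) = R} = 1)
      \<longleftrightarrow> (\<forall>R\<in>gamma_regions ns. \<exists>!c. c \<in> crossings ns \<and> corner_region ns c (d c) = R)"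
    by (simp add: card_eq_Suc_0_iff_ex1)
  moreover have "{x. (c, x) \<in> corner_graph d} = {d c}" if "c \<in> crossings ns" for c
    using that by (auto simp: corner_graph_def)
  moreover have "corner_graph d \<subseteq> gamma_edges ns
      \<longleftrightarrow> (\<forall>c\<in>crossings ns. corner_region ns c (d c) \<notin> {U, Rtop})"
    by (auto simp: corner_graph_def gamma_edges_def)
  ultimately show ?thesis
    by (simp add: perfect_matching_def exact_corner_choice_def)
qed

lemma perfect_matching_is_corner_graph:
  assumes "perfect_matching ns M"
  obtains d where "M = corner_graph d"
proof
  have M: "M \<subseteq> gamma_edges ns" "\<And>c. c \<in> crossings ns \<Longrightarrow> \<exists>!x. (c, x) \<in> M"
    using assms by (auto simp: perfect_matching_def card_eq_Suc_0_iff_ex1)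
  define d where "d c = (THE x. (c, x) \<in> M)" for c
  have "(c, x) \<in> M \<longleftrightarrow> x = d c" if "c \<in> crossings ns" for c x
    using theI'[OF M(2)[OF that]] M(2)[OF that] by (auto simp: d_def)
  then show "M = corner_graph d"
    using M(1) by (auto simp: corner_graph_def gamma_edges_def)
qed

lemma corner_graph_eq_iff: "corner_graph d = corner_graph d' \<longleftrightarrow> (\<forall>c\<in>crossings ns. d c = d' c)"
  by (auto simp: corner_graph_def image_iff intro!: image_cong)

lemma gamma_region_cases:
  "R \<in> gamma_regions ns \<longleftrightarrow> R = Rbot \<or> (\<exists>i q. R = Inside i q \<and> 1 \<le> i \<and> i \<le> k \<and> 1 \<le> q \<and> q < m i)
     \<or> (\<exists>i. R = W i \<and> 1 \<le> i \<and> i < k)"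
  by (auto simp: gamma_regions_def regions_def)

lemma corner_region_Rbot:
  "(i, p) \<in> crossings ns \<Longrightarrow> corner_region ns (i, p) x = Rbot \<longleftrightarrow> x = South \<and> p = m i"
  by (cases x) (auto simp: corner_region_def crossing_iff)

lemma corner_region_Inside:
  "(i', p) \<in> crossings ns \<Longrightarrow> 1 \<le> q \<Longrightarrow> corner_region ns (i', p) x = Inside i q \<longleftrightarrow>
     i' = i \<and> ((x = South \<and> p = q \<and> q \<noteq> m i) \<or> (x = North \<and> p = Suc q))"
  by (cases x) (auto simp: corner_region_def crossing_iff)

lemma corner_region_W:
  "(i', p) \<in> crossings ns \<Longrightarrow> 1 \<le> i \<Longrightarrow> corner_region ns (i', p) x = W i \<longleftrightarrow>
     (i' = i \<and> i \<noteq> k \<and> x = East) \<or> (i' = Suc i \<and> x = West)"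
  by (cases x) (auto simp: corner_region_def crossing_iff)

definition state_corner :: "nat \<Rightarrow> (nat \<Rightarrow> nat) \<Rightarrow> nat \<times> nat \<Rightarrow> corner" where
  "state_corner j P c = (case c of (i, p) \<Rightarrow>
     if p < P i then South else if P i < p then North
     else if i = j then South else if i < j then East else West)"

lemma state_corner_Rbot:
  assumes "admissible j P" "c \<in> crossings ns"
  shows "corner_region ns c (state_corner j P c) = Rbot \<longleftrightarrow> c = (j, m j)"
  using assms by (cases c) (auto simp: state_corner_def corner_region_Rbot admissible_def crossing_iff)

lemma state_corner_Inside:
  assumes "admissible j P" "c \<in> crossings ns" "1 \<le> i" "i \<le> k" "1 \<le> q" "q < m i"
  shows "corner_region ns c (state_corner j P c) = Inside i q
    \<longleftrightarrow> c = (if q < P i then (i, q) else (i, Suc q))"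
  using assms by (cases c) (auto simp: state_corner_def corner_region_Inside admissible_def crossing_iff)

lemma state_corner_W:
  assumes "admissible j P" "c \<in> crossings ns" "1 \<le> i" "i < k"
  shows "corner_region ns c (state_corner j P c) = W i
    \<longleftrightarrow> c = (if i < j then (i, P i) else (Suc i, P (Suc i)))"
  using assms by (cases c) (auto simp: state_corner_def corner_region_W admissible_def crossing_iff)

lemma exact_state_corner:
  assumes adm: "admissible j P"
  shows "exact_corner_choice (state_corner j P)"
  unfolding exact_corner_choice_def
proof (intro conjI ballI)
  note P = admissibleD[OF adm]
  fix c assume c: "c \<in> crossings ns"
  obtain i p where c_eq: "c = (i, p)" by fastforce
  have "1 \<le> i" "i \<le> k" "1 \<le> P i"
    using c c_eq P(4)[of i] by (auto simp: crossing_iff)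
  then show "corner_region ns c (state_corner j P c) \<notin> {U, Rtop}"
    using P(1,2) c_eq by (auto simp: state_corner_def corner_region_def)
next
  note P = admissibleD[OF adm]
  fix R assume "R \<in> gamma_regions ns"
  then consider "R = Rbot" | i q where "R = Inside i q" "1 \<le> i" "i \<le> k" "1 \<le> q" "q < m i"
    | i where "R = W i" "1 \<le> i" "i < k"
    by (auto simp: gamma_region_cases)
  then show "\<exists>!c. c \<in> crossings ns \<and> corner_region ns c (state_corner j P c) = R"
  proof cases
    case 1
    have "(j, m j) \<in> crossings ns"
      using P m_pos by (simp add: crossing_iff)
    with 1 show ?thesis
      using state_corner_Rbot[OF adm] by (intro ex1I[of _ "(j, m j)"]) auto
  next
    case (2 i q)
    let ?w = "if q < P i then (i, q) else (i, Suc q)"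
    have "?w \<in> crossings ns"
      using 2 by (simp add: crossing_iff)
    with 2 show ?thesis
      using state_corner_Inside[OF adm _ 2(2-5)] by (intro ex1I[of _ ?w]) auto
  next
    case (3 i)
    let ?w = "if i < j then (i, P i) else (Suc i, P (Suc i))"
    have "?w \<in> crossings ns"
      using 3 admissible_crossing[OF adm] by simp
    with 3 show ?thesis
      using state_corner_W[OF adm _ 3(2,3)] by (intro ex1I[of _ ?w]) auto
  qed
qed

lemma state_corner_inj:
  assumes adm: "admissible j P" "admissible j' P'"
    and eq: "\<And>c. c \<in> crossings ns \<Longrightarrow> state_corner j P c = state_corner j' P' c"
  shows "j = j' \<and> P = P'"
proof -
  note P = admissibleD[OF adm(1)] and P' = admissibleD[OF adm(2)]
  have jj: "j = j'"
    using eq[of "(j, m j)"] P P'(4)[of j] m_pos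
    by (auto simp: crossing_iff state_corner_def split: if_splits)
  have "P i = P' i" if "1 \<le> i" "i \<le> k" for i
    using eq[OF admissible_crossing[OF adm(1) that]] jj P(3) P'(3)
    by (auto simp: state_corner_def split: if_splits)
  moreover have "P i = P' i" if "\<not> (1 \<le> i \<and> i \<le> k)" for i
    using adm that by (simp add: admissible_def)
  ultimately show ?thesis using jj by blast
qed

lemma exact_corner_choice_unique:
  assumes "exact_corner_choice d" "R \<in> gamma_regions ns"
    and "c \<in> crossings ns" "corner_region ns c (d c) = R"
    and "c' \<in> crossings ns" "corner_region ns c' (d c') = R"
  shows "c = c'"
  using assms unfolding exact_corner_choice_def by blast

lemma exact_corner_choice_covers:
  assumes "exact_corner_choice d" "R \<in> gamma_regions ns"
  obtains c where "c \<in> crossings ns" "corner_region ns c (d c) = R"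
  using assms unfolding exact_corner_choice_def by blast

lemma exact_corner_choice_column:
  assumes d: "exact_corner_choice d" and i: "1 \<le> i" "i \<le> k"
  obtains q where "1 \<le> q" "q \<le> m i" "\<And>p. 1 \<le> p \<Longrightarrow> p < q \<Longrightarrow> d (i, p) = South"
    "\<And>p. q < p \<Longrightarrow> p \<le> m i \<Longrightarrow> d (i, p) = North" "d (i, q) = South \<Longrightarrow> q = m i"
proof (rule corner_column_split[of "m i" "\<lambda>p. d (i, p)"])
  show "1 \<le> m i"
    using m_pos i .
  have "(i, 1) \<in> crossings ns"
    using i m_pos by (simp add: crossing_iff)
  then show "d (i, 1) \<noteq> North"
    using d by (auto simp: exact_corner_choice_def corner_region_def)
  fix p assume p: "1 \<le> p" "p < m i"
  then have R: "Inside i p \<in> gamma_regions ns" and c: "(i, p) \<in> crossings ns" "(i, Suc p) \<in> crossings ns"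
    using i by (auto simp: gamma_region_cases crossing_iff)
  show "d (i, p) = South \<longleftrightarrow> d (i, Suc p) \<noteq> North"
  proof
    assume "d (i, p) = South"
    then show "d (i, Suc p) \<noteq> North"
      using exact_corner_choice_unique[OF d R c(1) _ c(2)] p corner_region_Inside[OF c(1) p(1)]
        corner_region_Inside[OF c(2) p(1)] by auto
  next
    assume not_north: "d (i, Suc p) \<noteq> North"
    obtain c' where c': "c' \<in> crossings ns" "corner_region ns c' (d c') = Inside i p"
      using exact_corner_choice_covers[OF d R] .
    then show "d (i, p) = South"
      using corner_region_Inside[OF _ p(1)] not_north by (cases c') auto
  qed
qed blast

lemma exact_corner_choice_columns:
  assumes d: "exact_corner_choice d"
  obtains P where "\<And>i. \<not> (1 \<le> i \<and> i \<le> k) \<Longrightarrow> P i = 0"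
    and "\<And>i. 1 \<le> i \<Longrightarrow> i \<le> k \<Longrightarrow> (i, P i) \<in> crossings ns"
    and "\<And>i. 1 \<le> i \<Longrightarrow> i \<le> k \<Longrightarrow> d (i, P i) = South \<Longrightarrow> P i = m i"
    and "\<And>i p. (i, p) \<in> crossings ns \<Longrightarrow>
      d (i, p) = (if p < P i then South else if P i < p then North else d (i, P i))"
proof -
  define column_split where "column_split i q \<longleftrightarrow> 1 \<le> q \<and> q \<le> m i \<and>
      (\<forall>p. 1 \<le> p \<and> p < q \<longrightarrow> d (i, p) = South) \<and> (\<forall>p. q < p \<and> p \<le> m i \<longrightarrow> d (i, p) = North) \<and>
      (d (i, q) = South \<longrightarrow> q = m i)" for i q
  define P where "P i = (if 1 \<le> i \<and> i \<le> k then SOME q. column_split i q else 0)" for i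
  have P: "column_split i (P i)" if "1 \<le> i" "i \<le> k" for i
  proof -
    have "\<exists>q. column_split i q"
      by (rule exact_corner_choice_column[OF d that]) (auto simp: column_split_def)
    then show ?thesis
      using that unfolding P_def by (simp add: someI_ex)
  qed
  show thesis
  proof (rule that)
    show "(i, p) \<in> crossings ns \<Longrightarrow>
        d (i, p) = (if p < P i then South else if P i < p then North else d (i, P i))" for i p
      using P[of i] by (auto simp: crossing_iff column_split_def)
  qed (use P in \<open>auto simp: P_def crossing_iff column_split_def\<close>)
qed

lemma exact_corner_choice_Rbot:
  assumes d: "exact_corner_choice d"
    and P_crossing: "\<And>i. 1 \<le> i \<Longrightarrow> i \<le> k \<Longrightarrow> (i, P i) \<in> crossings ns"
    and d_col: "\<And>i p. (i, p) \<in> crossings ns \<Longrightarrow>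
      d (i, p) = (if p < P i then South else if P i < p then North else d (i, P i))"
  obtains j where "1 \<le> j" "j \<le> k" "d (j, P j) = South"
proof -
  obtain c where c: "c \<in> crossings ns" "corner_region ns c (d c) = Rbot"
    using exact_corner_choice_covers[OF d, of Rbot] by (auto simp: gamma_region_cases)
  obtain i p where c_eq: "c = (i, p)" by fastforce
  have i: "1 \<le> i" "i \<le> k" and p: "p = m i" "d (i, p) = South"
    using c c_eq corner_region_Rbot[of i p "d c"] by (auto simp: crossing_iff)
  have "P i = m i"
    using d_col[of i p] c c_eq p P_crossing[OF i] by (auto simp: crossing_iff split: if_splits)
  then show thesis
    using that[OF i] p by simp
qed

lemma exact_corner_choice_row:
  assumes d: "exact_corner_choice d"
    and P_crossing: "\<And>i. 1 \<le> i \<Longrightarrow> i \<le> k \<Longrightarrow> (i, P i) \<in> crossings ns"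
    and d_col: "\<And>i p. (i, p) \<in> crossings ns \<Longrightarrow>
      d (i, p) = (if p < P i then South else if P i < p then North else d (i, P i))"
    and i: "1 \<le> i" "i < k"
  shows "d (i, P i) = East \<longleftrightarrow> d (Suc i, P (Suc i)) \<noteq> West"
proof
  have R: "W i \<in> gamma_regions ns"
    using i by (simp add: gamma_region_cases)
  assume "d (i, P i) = East"
  then show "d (Suc i, P (Suc i)) \<noteq> West"
    using exact_corner_choice_unique[OF d R P_crossing[of i] _ P_crossing[of "Suc i"]] i
      corner_region_W[OF P_crossing[of i]] corner_region_W[OF P_crossing[of "Suc i"]]
    by auto
next
  have R: "W i \<in> gamma_regions ns"
    using i by (simp add: gamma_region_cases)
  assume not_west: "d (Suc i, P (Suc i)) \<noteq> West"
  obtain c where c: "c \<in> crossings ns" "corner_region ns c (d c) = W i"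
    using exact_corner_choice_covers[OF d R] .
  then show "d (i, P i) = East"
    using corner_region_W[OF _ i(1)] d_col not_west by (cases c) (fastforce split: if_splits)
qed

lemma exact_corner_choice_state:
  assumes d: "exact_corner_choice d"
  obtains j P where "admissible j P" "\<And>c. c \<in> crossings ns \<Longrightarrow> d c = state_corner j P c"
proof -
  obtain P where P_zero: "\<And>i. \<not> (1 \<le> i \<and> i \<le> k) \<Longrightarrow> P i = 0"
    and P_crossing: "\<And>i. 1 \<le> i \<Longrightarrow> i \<le> k \<Longrightarrow> (i, P i) \<in> crossings ns"
    and P_bottom: "\<And>i. 1 \<le> i \<Longrightarrow> i \<le> k \<Longrightarrow> d (i, P i) = South \<Longrightarrow> P i = m i"
    and d_col: "\<And>i p. (i, p) \<in> crossings ns \<Longrightarrow>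
      d (i, p) = (if p < P i then South else if P i < p then North else d (i, P i))"
    using exact_corner_choice_columns[OF d] by blast
  obtain j where j: "1 \<le> j" "j \<le> k" "d (j, P j) = South"
    using exact_corner_choice_Rbot[OF d P_crossing d_col] by blast
  have row: "d (i, P i) = East \<longleftrightarrow> d (Suc i, P (Suc i)) \<noteq> West" if "1 \<le> i" "i < k" for i
    using exact_corner_choice_row[OF d P_crossing d_col that] .
  have "admissible j P"
    using j P_zero P_crossing P_bottom by (auto simp: admissible_def crossing_iff)
  moreover have "d c = state_corner j P c" if c: "c \<in> crossings ns" for c
  proof -
    obtain i p where c_eq: "c = (i, p)" "1 \<le> i" "i \<le> k"
      using c by (cases c) (auto simp: crossing_iff)
    have "d (i, P i) = (if i = j then South else if i < j then East else West)"
    proof (cases i j rule: linorder_cases)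
      case less
      have "d (i, P i) = East"
        by (rule corner_row_split(1)[where g = "\<lambda>i. d (i, P i)" and n = k])
          (use j row c_eq less in auto)
      then show ?thesis using less by simp
    next
      case equal
      then show ?thesis using j(3) by simp
    next
      case greater
      have "d (i, P i) = West"
        by (rule corner_row_split(2)[where g = "\<lambda>i. d (i, P i)" and n = k])
          (use j row c_eq greater in auto)
      then show ?thesis using greater by simp
    qed
    then show ?thesis
      using d_col[of i p] c c_eq by (simp add: state_corner_def)
  qed
  ultimately show thesis
    using that by blast
qed

definition col_offset :: "nat \<Rightarrow> nat" where
  "col_offset i = (\<Sum>j\<in>{1..<i}. m j)"

lemma cnum_eq: "cnum ns (i, p) = (if i = 1 then p else col_offset i + (m i + 1 - p))"
  by (simp add: cnum_def col_offset_def)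

lemma cnum_bounds:
  assumes "(i, p) \<in> crossings ns"
  shows "col_offset i < cnum ns (i, p)" "cnum ns (i, p) \<le> col_offset i + m i"
  using assms by (auto simp: cnum_eq crossing_iff col_offset_def)

lemma cnum_less_column:
  assumes "(i, p) \<in> crossings ns" "(i', p') \<in> crossings ns" "i < i'"
  shows "cnum ns (i, p) < cnum ns (i', p')"
proof -
  have "col_offset i + m i = col_offset (Suc i)"
    using assms(1) by (simp add: col_offset_def crossing_iff)
  also have "\<dots> \<le> col_offset i'"
    unfolding col_offset_def using assms(3) by (intro sum_mono2) auto
  finally show ?thesis
    using cnum_bounds[OF assms(1)] cnum_bounds[OF assms(2)] by linarith
qed

lemma cnum_le_same_column:
  assumes "(i, p) \<in> crossings ns" "(i, p') \<in> crossings ns"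
  shows "cnum ns (i, p) \<le> cnum ns (i, p') \<longleftrightarrow> (if i = 1 then p \<le> p' else p' \<le> p)"
  using assms by (auto simp: cnum_eq crossing_iff)

lemma cnum_column_min_iff:
  assumes "(i, p) \<in> crossings ns"
  shows "(\<forall>q. 1 \<le> q \<and> q \<le> m i \<longrightarrow> cnum ns (i, p) \<le> cnum ns (i, q))
    \<longleftrightarrow> p = (if i = 1 then 1 else m i)"
proof
  let ?q = "if i = 1 then 1 else m i"
  assume min: "\<forall>q. 1 \<le> q \<and> q \<le> m i \<longrightarrow> cnum ns (i, p) \<le> cnum ns (i, q)"
  have q: "(i, ?q) \<in> crossings ns"
    using assms m_pos by (auto simp: crossing_iff)
  then show "p = ?q"
    using min cnum_le_same_column[OF assms q] assms by (auto simp: crossing_iff split: if_splits)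
next
  assume "p = (if i = 1 then 1 else m i)"
  then show "\<forall>q. 1 \<le> q \<and> q \<le> m i \<longrightarrow> cnum ns (i, p) \<le> cnum ns (i, q)"
    using assms by (auto simp: cnum_eq crossing_iff)
qed

lemma cnum_below_column_iff:
  assumes "(i, p) \<in> crossings ns" "1 \<le> i'" "i' \<le> k" "i' \<noteq> i"
  shows "(\<forall>q. 1 \<le> q \<and> q \<le> m i' \<longrightarrow> cnum ns (i, p) \<le> cnum ns (i', q)) \<longleftrightarrow> i < i'"
proof
  assume "\<forall>q. 1 \<le> q \<and> q \<le> m i' \<longrightarrow> cnum ns (i, p) \<le> cnum ns (i', q)"
  moreover have "(i', 1) \<in> crossings ns"
    using assms m_pos by (simp add: crossing_iff)
  ultimately show "i < i'"
    using cnum_less_column[OF _ assms(1), of i' 1] assms(2,3,4) m_pos[of i'] by fastforce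
qed (use assms cnum_less_column in \<open>auto intro: less_imp_le simp: crossing_iff\<close>)

lemma cnum_below_row_iff:
  assumes "(j, p) \<in> crossings ns" "\<And>i. 1 \<le> i \<Longrightarrow> i \<le> k \<Longrightarrow> (i, Q i) \<in> crossings ns"
  shows "(\<forall>i. 1 \<le> i \<and> i \<le> k \<and> i \<noteq> j \<longrightarrow> cnum ns (j, p) \<le> cnum ns (i, Q i)) \<longleftrightarrow> j = 1"
proof
  assume below: "\<forall>i. 1 \<le> i \<and> i \<le> k \<and> i \<noteq> j \<longrightarrow> cnum ns (j, p) \<le> cnum ns (i, Q i)"
  show "j = 1"
  proof (rule ccontr)
    assume "j \<noteq> 1"
    then have "cnum ns (1, Q 1) < cnum ns (j, p)"
      using cnum_less_column[OF assms(2)[of 1] assms(1)] k_pos assms(1) by (simp add: crossing_iff)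
    then show False
      using below k_pos \<open>j \<noteq> 1\<close> by fastforce
  qed
qed (use assms cnum_less_column in \<open>auto intro: less_imp_le simp: crossing_iff\<close>)

subsection \<open>Activities\<close>

text \<open>Both the Tutte activity of a crossing with respect to the tree of (j, P) and the
  liveness of its edge in the matching of (j, P) turn out to be this condition.\<close>
definition state_live :: "nat \<Rightarrow> (nat \<Rightarrow> nat) \<Rightarrow> nat \<times> nat \<Rightarrow> bool" where
  "state_live j P c = (case c of (i, p) \<Rightarrow>
     if i = j then j = 1
     else if p < P i then i = 1
     else if P i < p then i \<noteq> 1
     else i < j \<and> p = (if i = 1 then 1 else m i))"

lemma tree_cut_crossings:
  assumes "admissible j P" "f \<in> state_tree j P"
  shows "tree_cut j P f \<subseteq> crossings ns"
proof -
  obtain i p where f: "f = (i, p)" "(i, p) \<in> crossings ns"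
    using assms(2) by (cases f) (auto simp: state_tree_def)
  then have "(i, P i) \<in> crossings ns"
    using admissible_crossing[OF assms(1)] by (simp add: crossing_iff)
  then show ?thesis
    using f admissible_crossing[OF assms(1)] by (auto simp: tree_cut_def)
qed

lemma fund_cut_state_tree:
  assumes "admissible j P" "f \<in> state_tree j P"
  shows "fund_cut (crossings ns) (tait_ends ns) (state_tree j P) f = tree_cut j P f"
  using tree_cut_iff[OF assms] tree_cut_crossings[OF assms] by (auto simp: fund_cut_def)

lemma fund_cycle_state_tree:
  assumes adm: "admissible j P" and c: "(i, P i) \<in> crossings ns" and i: "i \<noteq> j"
  shows "fund_cycle (tait_ends ns) (state_tree j P) (i, P i) = {f \<in> crossings ns. fst f = j \<or> fst f = i}"
proof -
  have "{f \<in> state_tree j P. (i, P i) \<in> tree_cut j P f}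
      = {f \<in> crossings ns. fst f = j \<or> (fst f = i \<and> f \<noteq> (i, P i))}"
  proof (intro set_eqI iffI)
    fix f assume "f \<in> {f \<in> state_tree j P. (i, P i) \<in> tree_cut j P f}"
    then show "f \<in> {f \<in> crossings ns. fst f = j \<or> (fst f = i \<and> f \<noteq> (i, P i))}"
      using i by (cases f) (auto simp: state_tree_def tree_cut_def split: if_splits)
  next
    fix f assume "f \<in> {f \<in> crossings ns. fst f = j \<or> (fst f = i \<and> f \<noteq> (i, P i))}"
    then show "f \<in> {f \<in> state_tree j P. (i, P i) \<in> tree_cut j P f}"
      using i c by (cases f) (auto simp: state_tree_def tree_cut_def crossing_iff)
  qed
  then show ?thesis
    using tree_cut_iff[OF adm _ c] c by (auto simp: fund_cycle_def)
qed

lemma tutte_live_tree_crossing: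
  assumes adm: "admissible j P" and c: "(i, p) \<in> state_tree j P"
  shows "tutte_live (crossings ns) (tait_ends ns) (cnum ns) (state_tree j P) (i, p) \<longleftrightarrow> state_live j P (i, p)"
proof -
  have c': "(i, p) \<in> crossings ns"
    using c by (simp add: state_tree_def)
  have live_iff: "tutte_live (crossings ns) (tait_ends ns) (cnum ns) (state_tree j P) (i, p)
      \<longleftrightarrow> (\<forall>f\<in>tree_cut j P (i, p). cnum ns (i, p) \<le> cnum ns f)"
    using c by (simp add: tutte_live_def fund_cut_state_tree[OF adm])
  show ?thesis
  proof (cases "i = j")
    case True
    then have "(\<forall>f\<in>tree_cut j P (i, p). cnum ns (i, p) \<le> cnum ns f)
        \<longleftrightarrow> (\<forall>i'. 1 \<le> i' \<and> i' \<le> k \<and> i' \<noteq> j \<longrightarrow> cnum ns (j, p) \<le> cnum ns (i', P i'))"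
      by (auto simp: tree_cut_def)
    then show ?thesis
      using live_iff cnum_below_row_iff[of j p P] c' True admissible_crossing[OF adm]
      by (simp add: state_live_def)
  next
    case False
    then have "p \<noteq> P i"
      using c by (simp add: state_tree_def)
    moreover have "(i, P i) \<in> crossings ns"
      using c' admissible_crossing[OF adm] by (simp add: crossing_iff)
    ultimately show ?thesis
      using live_iff cnum_le_same_column[OF c'] False by (auto simp: tree_cut_def state_live_def)
  qed
qed

lemma tutte_live_state_tree:
  assumes adm: "admissible j P" and c: "(i, p) \<in> crossings ns"
  shows "tutte_live (crossings ns) (tait_ends ns) (cnum ns) (state_tree j P) (i, p) \<longleftrightarrow> state_live j P (i, p)"
proof (cases "(i, p) \<in> state_tree j P")
  case False
  then have i: "i \<noteq> j" "p = P i"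
    using c by (auto simp: state_tree_def)
  then have "tutte_live (crossings ns) (tait_ends ns) (cnum ns) (state_tree j P) (i, p)
      \<longleftrightarrow> (\<forall>q. 1 \<le> q \<and> q \<le> m j \<longrightarrow> cnum ns (i, p) \<le> cnum ns (j, q))
        \<and> (\<forall>q. 1 \<le> q \<and> q \<le> m i \<longrightarrow> cnum ns (i, p) \<le> cnum ns (i, q))"
    using False c admissibleD(1,2)[OF adm]
    by (auto simp: tutte_live_def fund_cycle_state_tree[OF adm] crossing_iff)
  then show ?thesis
    using cnum_below_column_iff[OF c, of j] cnum_column_min_iff[OF c] i admissibleD[OF adm]
    by (simp add: state_live_def)
qed (rule tutte_live_tree_crossing[OF adm])

lemma incident_Inside:
  assumes "c \<in> crossings ns" "1 \<le> q" "q < m i"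
  shows "(\<exists>x. corner_region ns c x = Inside i q) \<longleftrightarrow> c = (i, q) \<or> c = (i, Suc q)"
  using assms corner_region_Inside[where i=i and q=q] by (cases c) (auto simp: crossing_iff)

lemma incident_Rbot:
  assumes "c \<in> crossings ns"
  shows "(\<exists>x. corner_region ns c x = Rbot) \<longleftrightarrow> snd c = m (fst c)"
  using assms corner_region_Rbot by (cases c) auto

lemma incident_W:
  assumes "c \<in> crossings ns" "1 \<le> i" "i < k"
  shows "(\<exists>x. corner_region ns c x = W i) \<longleftrightarrow> fst c = i \<or> fst c = Suc i"
  using assms corner_region_W[of _ _ i] by (cases c) auto

lemma gamma_live_tree_crossing:
  assumes adm: "admissible j P" and c: "(i, p) \<in> state_tree j P"
  shows "gamma_live ns ((i, p), state_corner j P (i, p)) \<longleftrightarrow> state_live j P (i, p)"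
proof -
  note P = admissibleD[OF adm]
  have c': "(i, p) \<in> crossings ns"
    using c by (simp add: state_tree_def)
  then have i: "1 \<le> i" "i \<le> k" "1 \<le> p" "p \<le> m i"
    by (auto simp: crossing_iff)
  let ?live = "gamma_live ns ((i, p), state_corner j P (i, p))"
  have live_iff: "?live \<longleftrightarrow> (\<forall>c'\<in>crossings ns.
      (\<exists>x. corner_region ns c' x = corner_region ns (i, p) (state_corner j P (i, p)))
        \<longrightarrow> cnum ns (i, p) \<le> cnum ns c')"
    by (simp add: gamma_live_def)
  consider (above) "p < P i" | (below) "P i < p" | (bottom) "i = j" "p = m j"
    using c P(3) by (cases p "P i" rule: linorder_cases) (auto simp: state_tree_def)
  then show ?thesis
  proof cases
    case above
    then have "corner_region ns (i, p) (state_corner j P (i, p)) = Inside i p"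
      and p: "p < m i" "(i, Suc p) \<in> crossings ns"
      using i P(4)[of i] by (auto simp: state_corner_def corner_region_def crossing_iff)
    then have "?live \<longleftrightarrow> cnum ns (i, p) \<le> cnum ns (i, Suc p)"
      using live_iff incident_Inside[OF _ i(3) p(1)] c' by auto
    then show ?thesis
      using above P(3) cnum_le_same_column[OF c' p(2)] by (auto simp: state_live_def)
  next
    case below
    then have "corner_region ns (i, p) (state_corner j P (i, p)) = Inside i (p - 1)"
      and p: "1 \<le> p - 1" "p - 1 < m i" "Suc (p - 1) = p" "(i, p - 1) \<in> crossings ns"
      using i P(4)[of i] by (auto simp: state_corner_def corner_region_def crossing_iff)
    then have "?live \<longleftrightarrow> cnum ns (i, p) \<le> cnum ns (i, p - 1)"
      using live_iff incident_Inside[OF _ p(1,2)] c' by auto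
    then show ?thesis
      using below P(3) i cnum_le_same_column[OF c' p(4)] by (auto simp: state_live_def)
  next
    case bottom
    then have "corner_region ns (i, p) (state_corner j P (i, p)) = Rbot"
      using P(3) by (simp add: state_corner_def corner_region_def)
    then have "?live \<longleftrightarrow> (\<forall>i'. 1 \<le> i' \<and> i' \<le> k \<and> i' \<noteq> j \<longrightarrow> cnum ns (j, p) \<le> cnum ns (i', m i'))"
      using live_iff incident_Rbot bottom m_pos by (auto simp: crossing_iff)
    then show ?thesis
      using cnum_below_row_iff[of j p m] c' bottom m_pos by (simp add: state_live_def crossing_iff)
  qed
qed

lemma gamma_live_non_tree_crossing:
  assumes adm: "admissible j P" and c: "(i, P i) \<in> crossings ns" and i: "i \<noteq> j"
  shows "gamma_live ns ((i, P i), state_corner j P (i, P i)) \<longleftrightarrow> state_live j P (i, P i)"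
proof (cases "i < j")
  case True
  then have "corner_region ns (i, P i) (state_corner j P (i, P i)) = W i" "i < k" "1 \<le> i"
    using admissibleD(2)[OF adm] c by (auto simp: state_corner_def corner_region_def crossing_iff)
  then have "gamma_live ns ((i, P i), state_corner j P (i, P i))
      \<longleftrightarrow> (\<forall>q. 1 \<le> q \<and> q \<le> m i \<longrightarrow> cnum ns (i, P i) \<le> cnum ns (i, q))
        \<and> (\<forall>q. 1 \<le> q \<and> q \<le> m (Suc i) \<longrightarrow> cnum ns (i, P i) \<le> cnum ns (Suc i, q))"
    using incident_W by (auto simp: gamma_live_def crossing_iff)
  then show ?thesis
    using True i cnum_column_min_iff[OF c] cnum_below_column_iff[OF c, of "Suc i"] \<open>i < k\<close>
    by (simp add: state_live_def)
next
  case False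
  then have "corner_region ns (i, P i) (state_corner j P (i, P i)) = W (i - 1)"
    and i': "1 \<le> i - 1" "i - 1 < k" "(i - 1, 1) \<in> crossings ns"
    using admissibleD(1)[OF adm] i c m_pos[of "i - 1"]
    by (auto simp: state_corner_def corner_region_def crossing_iff)
  moreover have "cnum ns (i - 1, 1) < cnum ns (i, P i)"
    using cnum_less_column[OF i'(3) c] i' by simp
  ultimately have "\<not> gamma_live ns ((i, P i), state_corner j P (i, P i))"
    using incident_W[OF i'(3) i'(1,2)] i'(3) i' by (fastforce simp: gamma_live_def)
  then show ?thesis
    using False i by (simp add: state_live_def)
qed

lemma gamma_live_state_corner:
  assumes adm: "admissible j P" and c: "(i, p) \<in> crossings ns"
  shows "gamma_live ns ((i, p), state_corner j P (i, p)) \<longleftrightarrow> state_live j P (i, p)"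
  using gamma_live_tree_crossing[OF adm, of i p] gamma_live_non_tree_crossing[OF adm, of i] c
  by (cases "(i, p) \<in> state_tree j P") (auto simp: state_tree_def)

lemma black_state_corner:
  assumes "admissible j P" "c \<in> crossings ns"
  shows "black (corner_region ns c (state_corner j P c)) \<longleftrightarrow> c \<in> state_tree j P"
  using assms by (cases c) (auto simp: state_corner_def corner_region_def black_def state_tree_def)

lemma tree_u_eq_sum:
  "tree_u ns S = (\<Sum>c\<in>crossings ns.
     if tutte_live (crossings ns) (tait_ends ns) (cnum ns) S c
     then (if (c \<in> S) = tait_pos ns c then 1 else -1) else 0)"
proof -
  let ?L = "tutte_live (crossings ns) (tait_ends ns) (cnum ns) S"
  have "tree_u ns S = (\<Sum>c\<in>crossings ns. of_bool (c \<in> S \<and> ?L c \<and> tait_pos ns c)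
      - of_bool (c \<notin> S \<and> ?L c \<and> tait_pos ns c) - of_bool (c \<in> S \<and> ?L c \<and> \<not> tait_pos ns c)
      + of_bool (c \<notin> S \<and> ?L c \<and> \<not> tait_pos ns c))"
    unfolding tree_u_def u_grading_def
    by (simp only: of_nat_card_filter_eq_sum[OF finite_crossings] sum.distrib sum_subtractf)
  also have "\<dots> = (\<Sum>c\<in>crossings ns. if ?L c then (if (c \<in> S) = tait_pos ns c then 1 else -1) else 0)"
    by (rule sum.cong) auto
  finally show ?thesis .
qed

lemma tree_v_eq_sum: "tree_v ns S = (\<Sum>c\<in>crossings ns. of_bool (c \<in> S \<and> tait_pos ns c))"
  unfolding tree_v_def v_grading_def
  using of_nat_card_filter_eq_sum[OF finite_crossings, where 'a=nat] by simp

text \<open>Crossing by crossing, the letter of the matched edge of c evaluates to the monomial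
  contributed by c to the gradings of the tree.\<close>
lemma state_weight:
  assumes adm: "admissible j P" and u: "u \<noteq> 0"
  shows "(\<Prod>\<epsilon>\<in>corner_graph (state_corner j P). alpha_kh ns u v \<epsilon>)
    = u powi tree_u ns (state_tree j P) * v ^ tree_v ns (state_tree j P)"
proof -
  let ?T = "state_tree j P"
  let ?L = "tutte_live (crossings ns) (tait_ends ns) (cnum ns) ?T"
  define eu where "eu c = (if ?L c then (if (c \<in> ?T) = tait_pos ns c then 1 else -1) else (0::int))" for c
  define ev where "ev c = (of_bool (c \<in> ?T \<and> tait_pos ns c) :: nat)" for c
  have "(\<Prod>\<epsilon>\<in>corner_graph (state_corner j P). alpha_kh ns u v \<epsilon>)
      = (\<Prod>c\<in>crossings ns. alpha_kh ns u v (c, state_corner j P c))"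
    unfolding corner_graph_def by (simp add: prod.reindex inj_on_def)
  also have "\<dots> = (\<Prod>c\<in>crossings ns. u powi eu c * v ^ ev c)"
  proof (rule prod.cong)
    fix c assume c: "c \<in> crossings ns"
    obtain i p where c_eq: "c = (i, p)" by fastforce
    have "gamma_live ns (c, state_corner j P c) \<longleftrightarrow> ?L c"
      using gamma_live_state_corner[OF adm] tutte_live_state_tree[OF adm] c c_eq by simp
    then show "alpha_kh ns u v (c, state_corner j P c) = u powi eu c * v ^ ev c"
      using black_state_corner[OF adm c]
      by (auto simp: alpha_kh_def eu_def ev_def Let_def power_int_minus)
  qed simp
  also have "\<dots> = u powi (\<Sum>c\<in>crossings ns. eu c) * v ^ (\<Sum>c\<in>crossings ns. ev c)"
    by (simp add: prod.distrib prod_power_int_sum[OF finite_crossings u] power_sum)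
  also have "\<dots> = u powi tree_u ns ?T * v ^ tree_v ns ?T"
    by (simp add: tree_u_eq_sum tree_v_eq_sum eu_def ev_def)
  finally show ?thesis .
qed

lemma bij_betw_state_tree:
  "bij_betw (\<lambda>(j, P). state_tree j P) {(j, P). admissible j P} (tait_spanning_trees ns)"
  unfolding bij_betw_def
proof (intro conjI subset_antisym subsetI)
  show "inj_on (\<lambda>(j, P). state_tree j P) {(j, P). admissible j P}"
    by (auto simp: inj_on_def dest: state_tree_inj)
  show "S \<in> tait_spanning_trees ns" if "S \<in> (\<lambda>(j, P). state_tree j P) ` {(j, P). admissible j P}" for S
    using that state_tree_spanning by auto
  fix S assume "S \<in> tait_spanning_trees ns"
  then obtain j P where "admissible j P" "S = state_tree j P"
    by (rule spanning_tree_state_tree)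
  then show "S \<in> (\<lambda>(j, P). state_tree j P) ` {(j, P). admissible j P}"
    by (auto intro: image_eqI[of _ _ "(j, P)"])
qed

lemma bij_betw_state_matching:
  "bij_betw (\<lambda>(j, P). corner_graph (state_corner j P)) {(j, P). admissible j P}
     {M. perfect_matching ns M}"
  unfolding bij_betw_def
proof (intro conjI subset_antisym subsetI)
  show "inj_on (\<lambda>(j, P). corner_graph (state_corner j P)) {(j, P). admissible j P}"
    by (auto simp: inj_on_def corner_graph_eq_iff dest: state_corner_inj)
  show "M \<in> {M. perfect_matching ns M}"
    if "M \<in> (\<lambda>(j, P). corner_graph (state_corner j P)) ` {(j, P). admissible j P}" for M
    using that exact_state_corner perfect_matching_corner_graph by auto
  fix M assume "M \<in> {M. perfect_matching ns M}"
  then obtain d where M: "M = corner_graph d" "exact_corner_choice d"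
    using perfect_matching_is_corner_graph perfect_matching_corner_graph by blast
  obtain j P where adm: "admissible j P" and "\<And>c. c \<in> crossings ns \<Longrightarrow> d c = state_corner j P c"
    using exact_corner_choice_state[OF M(2)] by blast
  then have "M = corner_graph (state_corner j P)"
    using M(1) by (simp add: corner_graph_eq_iff)
  with adm show "M \<in> (\<lambda>(j, P). corner_graph (state_corner j P)) ` {(j, P). admissible j P}"
    by (auto intro: image_eqI[of _ _ "(j, P)"])
qed

lemma matching_sum_eq_tree_sum:
  assumes "u \<noteq> 0"
  shows "(\<Sum>M\<in>{M. perfect_matching ns M}. \<Prod>\<epsilon>\<in>M. alpha_kh ns u v \<epsilon>)
    = (\<Sum>S\<in>tait_spanning_trees ns. u powi tree_u ns S * v ^ tree_v ns S)"
proof -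
  have "(\<Sum>M\<in>{M. perfect_matching ns M}. \<Prod>\<epsilon>\<in>M. alpha_kh ns u v \<epsilon>)
      = (\<Sum>(j, P)\<in>{(j, P). admissible j P}. \<Prod>\<epsilon>\<in>corner_graph (state_corner j P). alpha_kh ns u v \<epsilon>)"
    using sum.reindex_bij_betw[OF bij_betw_state_matching, of "\<lambda>M. \<Prod>\<epsilon>\<in>M. alpha_kh ns u v \<epsilon>"]
    by (simp add: case_prod_unfold)
  also have "\<dots> = (\<Sum>(j, P)\<in>{(j, P). admissible j P}.
      u powi tree_u ns (state_tree j P) * v ^ tree_v ns (state_tree j P))"
    by (rule sum.cong) (auto simp: state_weight[OF _ assms])
  also have "\<dots> = (\<Sum>S\<in>tait_spanning_trees ns. u powi tree_u ns S * v ^ tree_v ns S)"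
    using sum.reindex_bij_betw[OF bij_betw_state_tree, of "\<lambda>S. u powi tree_u ns S * v ^ tree_v ns S"]
    by (simp add: case_prod_unfold)
  finally show ?thesis .
qed

end

theorem corollary7p1:
  fixes ns :: "int list"
  assumes "ns \<noteq> []"
    and "\<forall>n\<in>set ns. n \<noteq> 0"
    and "pretzel_is_knot ns"
  shows "\<exists>\<sigma>::real. (\<sigma> = 1 \<or> \<sigma> = -1) \<and>
    (\<forall>u v::real. u \<noteq> 0 \<longrightarrow> v \<noteq> 0 \<longrightarrow>
      (\<Sum>M\<in>{M. perfect_matching ns M}. \<Prod>\<epsilon>\<in>M. alpha_kh ns u v \<epsilon>)
      = \<sigma> * (\<Sum>S\<in>tait_spanning_trees ns. u powi tree_u ns S * v ^ tree_v ns S))"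
proof -
  interpret pretzel_diagram ns
    using assms(1,2) by unfold_locales
  show ?thesis
    using matching_sum_eq_tree_sum by (intro exI[of _ 1]) simp
qed

end
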